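(* Let $\theta>0$, $f=(z,u_0)\in\mathcal Y'$ and $\widehat u\in\mathcal X$. Then for all $\boldsymbol y\in U$ and all $\boldsymbol\nu\in\mathscr F$, $$\big|\partial^{\boldsymbol\nu}_{\boldsymbol y}\exp(\theta\Phi^{\boldsymbol y})\big|\le e^{\max(\sigma,\,\sigma e^2+2\sigma-1)}\,|\boldsymbol\nu|!\,(e\boldsymbol b)^{\boldsymbol\nu},$$ where $\sigma:=\frac{\alpha_1+\alpha_2\|E_T\|^2_{\mathcal X\to L^2(D)}}{2}\big(\frac{\|f\|_{\mathcal Y'}}{\beta_1}+\|\widehat u\|_{\mathcal X}\big)^2\theta$.
   Context: Setting. $D\subset\mathbb R^d$ ($d\in\{1,2,3\}$) is a bounded Lipschitz domain, $I=[0,T]$ with $0<T<\infty$, and $U=[-\frac12,\frac12]^{\mathbb N}$. The diffusion coefficient is $a^{\boldsymbol y}(\boldsymbol x,t)=a_0(\boldsymbol x,t)+\sum_{j\ge1}y_j\psi_j(\boldsymbol x,t)$, where for a.e. $t\in I$, $a_0(\cdot,t),\psi_j(\cdot,t)\in L^\infty(D)$, $(\sup_{t\in I}\|\psi_j(\cdot,t)\|_{L^\infty(D)})_{j\ge1}\in\ell^1$, $t\mapsto a^{\boldsymbol y}(\boldsymbol x,t)$ is measurable, and there are constants $0<a_{\min}\le a_{\max}<\infty$ with $a_{\min}\le a^{\boldsymbol y}(\boldsymbol x,t)\le a_{\max}$ for all $\boldsymbol x\in D$, $\boldsymbol y\in U$, a.e. $t\in I$. $V=H^1_0(D)$ with $\langle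 v_1,v_2\rangle_V=\langle\nabla v_1,\nabla v_2\rangle_{L^2(D)}$, $V'=H^{-1}(D)$. $\mathcal X=\{v\in L^2(V;I):\partial_tv\in L^2(V';I)\}$ with $\|v\|_{\mathcal X}^2=\|v\|^2_{L^2(V;I)}+\|\partial_tv\|^2_{L^2(V';I)}$; $\mathcal Y'=L^2(V';I)\times L^2(D)$ with the product norm (the norm on $V'$ being the dual norm). For $\boldsymbol y\in U$ the operator $B^{\boldsymbol y}:\mathcal X\to\mathcal Y'$ is defined by $\langle B^{\boldsymbol y}w,(v_1,v_2)\rangle=\int_I\langle\partial_tw,v_1\rangle_{V',V}\,\mathrm dt+\int_I\int_Da^{\boldsymbol y}\nabla w\cdot\nabla v_1\,\mathrm d\boldsymbol x\,\mathrm dt+\int_Dw(\cdot,0)v_2\,\mathrm d\boldsymbol x$ for $(v_1,v_2)\in L^2(V;I)\times L^2(D)$. Each $B^{\boldsymbol y}$ is an isomorphism and there is a constant $\beta_1>0$ with $\sup_{\boldsymbol y\in U}\|(B^{\boldsymbol y})^{-1}\|_{\mathcal Y'\to\mathcal X}\le1/\beta_1$. For $f=(z,u_0)\in\mathcal Y'$ the state is $u^{\boldsymbol y}=(B^{\boldsymbol y})^{-1}f\in\mathcal X$. $E_T:\mathcal X\to L^2(D)$, $v\mapsto v(\cdot,T)$, is bounded. The sequence $\boldsymbol b$ is $b_j=\beta_1^{-1}\sup_{t\in I}\|\psi_j(\cdot,t)\|_{L^\infty(D)}$. $\mathscr F$ is the set of finitely supported multi-indices $\boldsymbol\nu\in\mathbb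 N_0^{\mathbb N}$, $|\boldsymbol\nu|=\sum_j\nu_j$, $(e\boldsymbol b)^{\boldsymbol\nu}=\prod_j(eb_j)^{\nu_j}$, $\partial^{\boldsymbol\nu}_{\boldsymbol y}=\prod_j(\partial/\partial y_j)^{\nu_j}$. Fix $\alpha_1,\alpha_2\ge0$ with $\alpha_1+\alpha_2>0$ and let $\Phi^{\boldsymbol y}:=\frac{\alpha_1}{2}\|u^{\boldsymbol y}-\widehat u\|^2_{L^2(V;I)}+\frac{\alpha_2}{2}\|E_T(u^{\boldsymbol y}-\widehat u)\|^2_{L^2(D)}$. *)

theory Defs
  imports "HOL-Analysis.Analysis"
begin

definition paramU :: "(nat \<Rightarrow> real) set" where
  "paramU = {y. \<forall>j. y j \<in> {-1/2..1/2}}"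

definition msupp :: "(nat \<Rightarrow> nat) \<Rightarrow> nat set" where
  "msupp \<nu> = {j. \<nu> j \<noteq> 0}"

definition multi_indices :: "(nat \<Rightarrow> nat) set" where
  "multi_indices = {\<nu>. finite (msupp \<nu>)}"

definition mabs :: "(nat \<Rightarrow> nat) \<Rightarrow> nat" where
  "mabs \<nu> = (\<Sum>j\<in>msupp \<nu>. \<nu> j)"

definition mpow :: "(nat \<Rightarrow> real) \<Rightarrow> (nat \<Rightarrow> nat) \<Rightarrow> real" where
  "mpow c \<nu> = (\<Prod>j\<in>msupp \<nu>. c j ^ \<nu> j)"

definition pdiff :: "nat \<Rightarrow> ((nat \<Rightarrow> real) \<Rightarrow> real) \<Rightarrow> (nat \<Rightarrow> real) \<Rightarrow> real" where
  "pdiff j F y = (THE D. ((\<lambda>t. F (y(j := t))) has_real_derivative D)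
                         (at (y j) within {-1/2..1/2}))"

definition idx_list :: "(nat \<Rightarrow> nat) \<Rightarrow> nat list" where
  "idx_list \<nu> = concat (map (\<lambda>j. replicate (\<nu> j) j) (sorted_list_of_set (msupp \<nu>)))"

definition dnu :: "(nat \<Rightarrow> nat) \<Rightarrow> ((nat \<Rightarrow> real) \<Rightarrow> real) \<Rightarrow> (nat \<Rightarrow> real) \<Rightarrow> real" where
  "dnu \<nu> F = foldr pdiff (idx_list \<nu>) F"

definition Bop :: "('x \<Rightarrow> 'y::real_normed_vector) \<Rightarrow> (nat \<Rightarrow> 'x \<Rightarrow> 'y) \<Rightarrow> (nat \<Rightarrow> real) \<Rightarrow> 'x \<Rightarrow> 'y" where
  "Bop B0 Bj y w = B0 w + (\<Sum>j. y j *\<^sub>R Bj j w)"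

definition Phi :: "real \<Rightarrow> real \<Rightarrow> ('x::real_normed_vector \<Rightarrow> 'h::real_normed_vector)
     \<Rightarrow> ('x \<Rightarrow> 'l::real_normed_vector) \<Rightarrow> ('x \<Rightarrow> 'y::real_normed_vector) \<Rightarrow> (nat \<Rightarrow> 'x \<Rightarrow> 'y)
     \<Rightarrow> 'y \<Rightarrow> 'x \<Rightarrow> (nat \<Rightarrow> real) \<Rightarrow> real" where
  "Phi \<alpha>1 \<alpha>2 J ET B0 Bj f uhat y =
     (let u = inv (Bop B0 Bj y) f in
      \<alpha>1 / 2 * (norm (J (u - uhat)))\<^sup>2 + \<alpha>2 / 2 * (norm (ET (u - uhat)))\<^sup>2)"

end

theory Submission
  imports Defs
begin

text \<open>Let \<open>u y = (B y)\<inverse> f\<close>. Differentiating \<open>B y (u y) = f\<close> in \<open>y j\<close> gives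
  \<open>\<partial>\<^sub>j u = - (B y)\<inverse> (B\<^sub>j (u y))\<close>. Iterating, \<open>\<partial>\<^sup>\<nu> u\<close> is \<open>(-1)^|\<nu>|\<close> times a sum, over the \<open>|\<nu>|!\<close>
  orderings of the differentiation directions, of products of the operators \<open>(B y)\<inverse> B\<^sub>j\<close> applied
  to \<open>u y\<close>; since \<open>\<parallel>(B y)\<inverse> B\<^sub>j\<parallel> \<le> b j\<close>, this gives \<open>\<parallel>\<partial>\<^sup>\<nu> u\<parallel> \<le> |\<nu>|! b^\<nu> \<parallel>f\<parallel> / \<beta>1\<close>.
  As \<open>\<theta> \<Phi>\<close> is a bounded quadratic form in \<open>u - uhat\<close>, Leibniz' rule and
  \<open>\<Sum>k\<le>n. (n choose k) k! (n - k)! = (n + 1)!\<close> give \<open>|\<partial>\<^sup>\<nu> (\<theta> \<Phi>)| \<le> \<sigma> (|\<nu>| + 1)! b^\<nu>\<close>.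
  Finally, \<open>\<partial>\<^sub>j exp (\<theta> \<Phi>) = exp (\<theta> \<Phi>) \<partial>\<^sub>j (\<theta> \<Phi>)\<close>, so Leibniz' rule expresses the derivatives of
  \<open>exp (\<theta> \<Phi>)\<close> of order \<open>n + 1\<close> through those of order at most \<open>n\<close>. An induction on the order
  bounds \<open>|\<partial>\<^sup>\<nu> exp (\<theta> \<Phi>)|\<close> by \<open>exp \<sigma> \<cdot> M\<^sub>|\<^sub>\<nu>\<^sub>| \<cdot> |\<nu>|! (e b)^\<nu>\<close>, where \<open>M\<^sub>n\<close> is the largest
  of \<open>\<kappa>^k / k!\<close> for \<open>k \<le> n\<close> and \<open>\<kappa> = 2 \<sigma> e\<^sup>2 / (e - 1)\<^sup>3\<close>; the inductive step rests on
  \<open>\<Sum>i. q^i (i + 1) (i + 2) = 2 / (1 - q)\<^sup>3\<close> at \<open>q = 1 / e\<close>. As \<open>M\<^sub>n = 1\<close> for \<open>\<kappa> \<le> 1\<close> and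
  \<open>M\<^sub>n \<le> exp \<kappa>\<close> always, \<open>exp \<sigma> \<cdot> M\<^sub>n \<le> exp (max \<sigma> (\<sigma> e\<^sup>2 + 2 \<sigma> - 1))\<close>.\<close>

section \<open>Partial derivatives on the parameter domain\<close>

abbreviation param_interval :: "real set" where
  "param_interval \<equiv> {-1/2..1/2}"

lemma fun_upd_in_paramU: "y \<in> paramU \<Longrightarrow> t \<in> param_interval \<Longrightarrow> y(i := t) \<in> paramU"
  by (auto simp: paramU_def)

lemma paramU_coord: "y \<in> paramU \<Longrightarrow> y i \<in> param_interval"
  by (auto simp: paramU_def)

definition has_pderiv :: "((nat \<Rightarrow> real) \<Rightarrow> 'a::real_normed_vector) \<Rightarrow> 'a \<Rightarrow> nat \<Rightarrow> (nat \<Rightarrow> real) \<Rightarrow> bool"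
  where "has_pderiv F D i y \<longleftrightarrow>
    ((\<lambda>t. F (y(i := t))) has_vector_derivative D) (at (y i) within param_interval)"

lemma pdiff_eqI:
  assumes y: "y \<in> paramU" and D: "has_pderiv F D i y"
  shows "pdiff i F y = D"
  unfolding pdiff_def
proof (rule the_equality)
  show D': "((\<lambda>t. F (y(i := t))) has_real_derivative D) (at (y i) within param_interval)"
    using D by (simp add: has_pderiv_def has_real_derivative_iff_has_vector_derivative)
  have yi: "y i \<in> cbox (-1/2) (1/2)"
    using paramU_coord[OF y] by simp
  show "D' = D" if "((\<lambda>t. F (y(i := t))) has_real_derivative D') (at (y i) within param_interval)" for D'
    using vector_derivative_unique_within_closed_interval[OF _ yi] that D'
    by (simp add: has_real_derivative_iff_has_vector_derivative)
qed

lemma has_pderiv_cong: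
  assumes "y \<in> paramU" and "\<And>z. z \<in> paramU \<Longrightarrow> F z = G z" and "has_pderiv G D i y"
  shows "has_pderiv F D i y"
  using assms unfolding has_pderiv_def
  by (intro has_vector_derivative_transform_within[where d=1, OF assms(3)[unfolded has_pderiv_def]])
    (use paramU_coord fun_upd_in_paramU in auto)

lemma pdiff_cong:
  assumes "y \<in> paramU" and "\<And>z. z \<in> paramU \<Longrightarrow> F z = G z"
  shows "pdiff i F y = pdiff i G y"
proof -
  have "((\<lambda>t. F (y(i := t))) has_real_derivative D) (at (y i) within param_interval) \<longleftrightarrow>
        ((\<lambda>t. G (y(i := t))) has_real_derivative D) (at (y i) within param_interval)" for D
    using has_pderiv_cong[OF assms(1)] assms(2)
    by (metis has_pderiv_def has_real_derivative_iff_has_vector_derivative)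
  then show ?thesis
    by (simp add: pdiff_def)
qed

definition pdiffs :: "nat list \<Rightarrow> ((nat \<Rightarrow> real) \<Rightarrow> real) \<Rightarrow> (nat \<Rightarrow> real) \<Rightarrow> real" where
  "pdiffs js F = foldr pdiff js F"

lemma pdiffs_Nil [simp]: "pdiffs [] F = F"
  and pdiffs_Cons: "pdiffs (i # js) F = pdiff i (pdiffs js F)"
  and pdiffs_append: "pdiffs (js @ ks) F = pdiffs js (pdiffs ks F)"
  by (simp_all add: pdiffs_def)

lemma pdiffs_cong:
  assumes "\<And>z. z \<in> paramU \<Longrightarrow> F z = G z" and "y \<in> paramU"
  shows "pdiffs js F y = pdiffs js G y"
  using assms(2)
proof (induction js arbitrary: y)
  case Nil
  then show ?case
    using assms(1) by simp
next
  case (Cons i js)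
  show ?case
    unfolding pdiffs_Cons by (rule pdiff_cong[OF Cons.prems Cons.IH])
qed

text \<open>A family \<open>F\<close> indexed by lists of coordinates in which \<open>F (i # js)\<close> is the partial
  derivative of \<open>F js\<close> in \<open>y\<^sub>i\<close>, for all lists \<open>js\<close> shorter than \<open>n\<close>; thus \<open>F js\<close> plays the
  role of \<open>\<partial>\<^sup>j\<^sup>s F []\<close>.\<close>
definition pderiv_tower :: "nat \<Rightarrow> (nat list \<Rightarrow> (nat \<Rightarrow> real) \<Rightarrow> 'a::real_normed_vector) \<Rightarrow> bool"
  where "pderiv_tower n F \<longleftrightarrow>
    (\<forall>js i y. length js < n \<longrightarrow> y \<in> paramU \<longrightarrow> has_pderiv (F js) (F (i # js) y) i y)"

lemma pderiv_towerD:
  "pderiv_tower n F \<Longrightarrow> length js < n \<Longrightarrow> y \<in> paramU \<Longrightarrow> has_pderiv (F js) (F (i # js) y) i y"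
  by (simp add: pderiv_tower_def)

lemma has_pderiv_sum_list:
  "(\<And>x. x \<in> set xs \<Longrightarrow> has_pderiv (F x) (D x) i y) \<Longrightarrow>
    has_pderiv (\<lambda>z. \<Sum>x\<leftarrow>xs. F x z) (\<Sum>x\<leftarrow>xs. D x) i y"
  by (induction xs) (auto simp: has_pderiv_def intro!: derivative_eq_intros)

section \<open>Leibniz' rule\<close>

text \<open>All \<open>2 ^ length js\<close> ways of distributing the entries of \<open>js\<close> over two subsequences: the
  index set of Leibniz' rule for iterated partial derivatives.\<close>
fun bipartitions :: "'a list \<Rightarrow> ('a list \<times> 'a list) list" where
  "bipartitions [] = [([], [])]"
| "bipartitions (i # js) = concat (map (\<lambda>(a, b). [(i # a, b), (a, i # b)]) (bipartitions js))"

lemma bipartitions_length: "(a, b) \<in> set (bipartitions js) \<Longrightarrow> length a + length b = length js"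
  by (induction js arbitrary: a b) auto

lemma prod_list_bipartitions:
  "(a, b) \<in> set (bipartitions js) \<Longrightarrow>
    prod_list (map c a) * prod_list (map c b) = prod_list (map (c :: _ \<Rightarrow> 'b::comm_monoid_mult) js)"
  by (induction js arbitrary: a b) (auto simp: ac_simps)

lemma sum_list_map_concat:
  "(\<Sum>x\<leftarrow>concat xss. f x) = (\<Sum>xs\<leftarrow>xss. \<Sum>x\<leftarrow>xs. (f x :: 'b::monoid_add))"
  by (induction xss) simp_all

lemma sum_list_bipartitions_Cons:
  "(\<Sum>(a, b)\<leftarrow>bipartitions (i # js). (F a b :: 'b::comm_monoid_add)) =
    (\<Sum>(a, b)\<leftarrow>bipartitions js. F (i # a) b + F a (i # b))"
  by (simp add: sum_list_map_concat split_def o_def)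

lemma sum_list_bipartitions_binomial:
  "(\<Sum>(a, b)\<leftarrow>bipartitions js. (\<phi> (length a) (length b) :: real)) =
    (\<Sum>k\<le>length js. real (length js choose k) * \<phi> k (length js - k))"
proof (induction js arbitrary: \<phi>)
  case Nil
  then show ?case by simp
next
  case (Cons i js)
  define n where "n = length js"
  have "(\<Sum>(a, b)\<leftarrow>bipartitions (i # js). \<phi> (length a) (length b)) =
      (\<Sum>k\<le>n. real (n choose k) * \<phi> (Suc k) (n - k)) + (\<Sum>k\<le>n. real (n choose k) * \<phi> k (Suc (n - k)))"
    unfolding sum_list_bipartitions_Cons
    using Cons[of "\<lambda>k l. \<phi> (Suc k) l"] Cons[of "\<lambda>k l. \<phi> k (Suc l)"]
    by (simp add: sum_list_addf split_def n_def)
  also have "(\<Sum>k\<le>n. real (n choose k) * \<phi> (Suc k) (n - k)) =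
      (\<Sum>k\<le>Suc n. real (if k = 0 then 0 else n choose (k - 1)) * \<phi> k (Suc n - k))"
    by (subst sum.atMost_Suc_shift) simp
  also have "(\<Sum>k\<le>n. real (n choose k) * \<phi> k (Suc (n - k))) =
      (\<Sum>k\<le>Suc n. real (n choose k) * \<phi> k (Suc n - k))"
    by (simp add: Suc_diff_le)
  also have "(\<Sum>k\<le>Suc n. real (if k = 0 then 0 else n choose (k - 1)) * \<phi> k (Suc n - k)) +
      (\<Sum>k\<le>Suc n. real (n choose k) * \<phi> k (Suc n - k)) =
      (\<Sum>k\<le>Suc n. real (Suc n choose k) * \<phi> k (Suc n - k))"
    unfolding sum.distrib[symmetric]
    by (rule sum.cong[OF refl]) (auto simp: algebra_simps gr0_conv_Suc)
  finally show ?case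
    by (simp add: n_def)
qed

lemma sum_list_bipartitions_fact:
  "(\<Sum>(a, b)\<leftarrow>bipartitions js. fact (length a) * fact (length b) :: real) = fact (length js + 1)"
proof -
  have "(\<Sum>k\<le>n. real (n choose k) * (fact k * fact (n - k))) = (\<Sum>k\<le>n. fact n)" for n
    by (rule sum.cong) (auto simp: binomial_fact)
  then show ?thesis
    using sum_list_bipartitions_binomial[of "\<lambda>k l. fact k * fact l" js] by simp
qed

context
  fixes n :: nat and pr :: "'a::real_normed_vector \<Rightarrow> 'b::real_normed_vector \<Rightarrow> real"
    and F :: "nat list \<Rightarrow> (nat \<Rightarrow> real) \<Rightarrow> 'a" and G :: "nat list \<Rightarrow> (nat \<Rightarrow> real) \<Rightarrow> 'b"
  assumes pr: "bounded_bilinear pr"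
    and F: "pderiv_tower n F" and G: "pderiv_tower n G"
begin

lemma has_pderiv_bilinear_bipartitions:
  assumes "length js < n" and y: "y \<in> paramU"
  shows "has_pderiv (\<lambda>z. \<Sum>(a, b)\<leftarrow>bipartitions js. pr (F a z) (G b z))
    (\<Sum>(a, b)\<leftarrow>bipartitions (i # js). pr (F a y) (G b y)) i y"
proof -
  have "has_pderiv (\<lambda>z. pr (F a z) (G b z)) (pr (F (i # a) y) (G b y) + pr (F a y) (G (i # b) y)) i y"
    if "(a, b) \<in> set (bipartitions js)" for a b
  proof -
    have "length a < n" "length b < n"
      using bipartitions_length[OF that] assms(1) by auto
    then show ?thesis
      using bounded_bilinear.has_vector_derivative[OF pr
          pderiv_towerD[OF F _ y, unfolded has_pderiv_def] pderiv_towerD[OF G _ y, unfolded has_pderiv_def]]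
      by (simp add: has_pderiv_def add.commute)
  qed
  then have "has_pderiv (\<lambda>z. \<Sum>(a, b)\<leftarrow>bipartitions js. pr (F a z) (G b z))
      (\<Sum>(a, b)\<leftarrow>bipartitions js. pr (F (i # a) y) (G b y) + pr (F a y) (G (i # b) y)) i y"
    unfolding split_def by (intro has_pderiv_sum_list) auto
  then show ?thesis
    unfolding sum_list_bipartitions_Cons .
qed

lemma pdiffs_bilinear:
  "length js \<le> n \<Longrightarrow> y \<in> paramU \<Longrightarrow>
    pdiffs js (\<lambda>z. pr (F [] z) (G [] z)) y = (\<Sum>(a, b)\<leftarrow>bipartitions js. pr (F a y) (G b y))"
proof (induction js arbitrary: y)
  case Nil
  then show ?case by simp
next
  case (Cons i js)
  then have "has_pderiv (pdiffs js (\<lambda>z. pr (F [] z) (G [] z)))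
      (\<Sum>(a, b)\<leftarrow>bipartitions (i # js). pr (F a y) (G b y)) i y"
    by (intro has_pderiv_cong[OF _ _ has_pderiv_bilinear_bipartitions]) auto
  then show ?case
    unfolding pdiffs_Cons using Cons.prems by (intro pdiff_eqI)
qed

lemma pderiv_tower_bilinear: "pderiv_tower n (\<lambda>js. pdiffs js (\<lambda>z. pr (F [] z) (G [] z)))"
  unfolding pderiv_tower_def
proof (intro allI impI)
  fix js :: "nat list" and i y
  assume js: "length js < n" and y: "y \<in> paramU"
  show "has_pderiv (pdiffs js (\<lambda>z. pr (F [] z) (G [] z)))
      (pdiffs (i # js) (\<lambda>z. pr (F [] z) (G [] z)) y) i y"
  proof -
    have "pdiffs (i # js) (\<lambda>z. pr (F [] z) (G [] z)) y = (\<Sum>(a, b)\<leftarrow>bipartitions (i # js). pr (F a y) (G b y))"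
      using js y by (intro pdiffs_bilinear) auto
    moreover have "has_pderiv (pdiffs js (\<lambda>z. pr (F [] z) (G [] z)))
        (\<Sum>(a, b)\<leftarrow>bipartitions (i # js). pr (F a y) (G b y)) i y"
      using js by (intro has_pderiv_cong[OF y _ has_pderiv_bilinear_bipartitions[OF js y]] pdiffs_bilinear) auto
    ultimately show ?thesis
      by simp
  qed
qed

end

lemma abs_pdiffs_bilinear_le:
  fixes pr :: "'a::real_normed_vector \<Rightarrow> 'b::real_normed_vector \<Rightarrow> real"
  assumes pr: "bounded_bilinear pr" and pr_le: "\<And>a b. \<bar>pr a b\<bar> \<le> K * (norm a * norm b)"
    and F: "\<And>n. pderiv_tower n F" and G: "\<And>n. pderiv_tower n G"
    and F_le: "\<And>js z. z \<in> paramU \<Longrightarrow> norm (F js z) \<le> fact (length js) * prod_list (map c js) * M"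
    and G_le: "\<And>js z. z \<in> paramU \<Longrightarrow> norm (G js z) \<le> fact (length js) * prod_list (map c js) * M'"
    and K: "K \<ge> 0" and c: "\<And>j. c j \<ge> 0" and y: "y \<in> paramU"
  shows "\<bar>pdiffs js (\<lambda>z. pr (F [] z) (G [] z)) y\<bar> \<le> K * M * M' * fact (length js + 1) * prod_list (map c js)"
proof -
  have "\<bar>pr (F a y) (G b y)\<bar> \<le> K * M * M' * prod_list (map c js) * (fact (length a) * fact (length b))"
    if ab: "(a, b) \<in> set (bipartitions js)" for a b
  proof -
    have "0 \<le> fact (length a) * prod_list (map c a) * M"
      using norm_ge_zero[of "F a y"] F_le[OF y, of a] by linarith
    then have "norm (F a y) * norm (G b y) \<le>
        (fact (length a) * prod_list (map c a) * M) * (fact (length b) * prod_list (map c b) * M')"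
      using F_le[OF y] G_le[OF y] by (intro mult_mono) auto
    then have "\<bar>pr (F a y) (G b y)\<bar> \<le>
        K * ((fact (length a) * prod_list (map c a) * M) * (fact (length b) * prod_list (map c b) * M'))"
      using pr_le K by (meson mult_left_mono order_trans)
    then show ?thesis
      using prod_list_bipartitions[OF ab, of c] by (simp add: ac_simps)
  qed
  then have "(\<Sum>(a, b)\<leftarrow>bipartitions js. \<bar>pr (F a y) (G b y)\<bar>) \<le>
      (\<Sum>(a, b)\<leftarrow>bipartitions js. K * M * M' * prod_list (map c js) * (fact (length a) * fact (length b)))"
    by (intro sum_list_mono) auto
  also have "\<dots> = K * M * M' * prod_list (map c js) * fact (length js + 1)"
    using sum_list_bipartitions_fact[of js] by (simp add: split_def sum_list_const_mult)
  finally show ?thesis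
    using pdiffs_bilinear[OF pr F G order_refl y] sum_list_abs[of "map (\<lambda>(a, b). pr (F a y) (G b y)) (bipartitions js)"]
    by (simp add: split_def o_def ac_simps)
qed

section \<open>Derivatives of the parametric solution\<close>

text \<open>The library lemma \<open>summable_norm_cancel\<close> is stated for class \<open>banach\<close>, to which a type
  variable of sort \<open>{real_normed_vector, complete_space}\<close> does not belong.\<close>
lemma summable_norm_cancel_complete:
  fixes f :: "nat \<Rightarrow> 'a::{real_normed_vector, complete_space}"
  assumes "summable (\<lambda>n. norm (f n))"
  shows "summable f"
  unfolding summable_iff_convergent Cauchy_convergent_iff [symmetric] Cauchy_iff
proof (intro allI impI)
  fix e :: real
  assume "0 < e"
  then obtain N where N: "\<And>m n. m \<ge> N \<Longrightarrow> norm (\<Sum>k\<in>{m..<n}. norm (f k)) < e"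
    using assms[unfolded summable_Cauchy] by blast
  have tail: "norm (sum f {m..<n}) < e" if "m \<ge> N" for m n
    using N[OF that, of n] norm_sum[of f "{m..<n}"] by (simp add: sum_nonneg)
  have "norm (sum f {..<m} - sum f {..<n}) < e" if "m \<ge> N" "n \<ge> N" for m n
  proof (cases m n rule: le_cases)
    case le
    then show ?thesis
      by (metis tail finite_lessThan lessThan_minus_lessThan lessThan_subset_iff norm_minus_commute
          sum_diff \<open>m \<ge> N\<close>)
  next
    case ge
    then show ?thesis
      by (metis tail finite_lessThan lessThan_minus_lessThan lessThan_subset_iff sum_diff \<open>n \<ge> N\<close>)
  qed
  then show "\<exists>M. \<forall>m\<ge>M. \<forall>n\<ge>M. norm (sum f {..<m} - sum f {..<n}) < e"
    by blast
qed

lemma has_vector_derivative_scaleR_continuous: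
  assumes "(k \<longlongrightarrow> k s) (at s within S)"
  shows "((\<lambda>t. (t - s) *\<^sub>R k t) has_vector_derivative k s) (at s within S)"
proof -
  have "((\<lambda>t. ((t - s) *\<^sub>R k t - (s - s) *\<^sub>R k s - (t - s) *\<^sub>R k s) /\<^sub>R norm (t - s)) \<longlongrightarrow> 0)
      (at s within S)"
  proof (rule tendsto_norm_zero_cancel, rule Lim_transform_eventually)
    show "((\<lambda>t. norm (k t - k s)) \<longlongrightarrow> 0) (at s within S)"
      using assms by (simp add: tendsto_norm_zero_iff LIM_zero_iff)
    show "\<forall>\<^sub>F t in at s within S. norm (k t - k s) =
        norm (((t - s) *\<^sub>R k t - (s - s) *\<^sub>R k s - (t - s) *\<^sub>R k s) /\<^sub>R norm (t - s))"
      by (auto simp: eventually_at_filter scaleR_diff_right[symmetric] abs_mult)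
  qed
  then show ?thesis
    by (simp add: has_vector_derivative_def has_derivative_at_within bounded_linear_scaleR_left)
qed

locale affine_parametric_operator =
  fixes B0 :: "'x::real_normed_vector \<Rightarrow> 'y::{real_normed_vector, complete_space}"
    and Bj :: "nat \<Rightarrow> 'x \<Rightarrow> 'y" and b :: "nat \<Rightarrow> real" and \<beta>1 :: real
  assumes B0_lin: "bounded_linear B0"
    and Bj_lin: "\<And>j. bounded_linear (Bj j)"
    and b_nonneg: "\<And>j. b j \<ge> 0" and b_summable: "summable b"
    and Bj_bound: "\<And>j w. norm (Bj j w) \<le> \<beta>1 * b j * norm w"
    and \<beta>1_pos: "\<beta>1 > 0"
    and B_bij: "\<And>y. y \<in> paramU \<Longrightarrow> bij (Bop B0 Bj y)"
    and B_inv_bound: "\<And>y g. y \<in> paramU \<Longrightarrow> norm (inv (Bop B0 Bj y) g) \<le> norm g / \<beta>1"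
begin

definition Binv :: "(nat \<Rightarrow> real) \<Rightarrow> 'y \<Rightarrow> 'x" where
  "Binv y = inv (Bop B0 Bj y)"

lemma summable_Bj_series:
  assumes "y \<in> paramU"
  shows "summable (\<lambda>k. y k *\<^sub>R Bj k w)"
proof (rule summable_norm_cancel_complete, rule summable_comparison_test'[where N=0])
  show "summable (\<lambda>k. \<beta>1 * b k * norm w)"
    by (intro summable_mult2 summable_mult b_summable)
  fix k
  have "\<bar>y k\<bar> \<le> 1"
    using paramU_coord[OF assms, of k] by auto
  then show "norm (norm (y k *\<^sub>R Bj k w)) \<le> \<beta>1 * b k * norm w"
    using Bj_bound[of k w] mult_right_mono[of "\<bar>y k\<bar>" 1 "norm (Bj k w)"] by simp
qed

lemma Bop_fun_upd:
  assumes "y \<in> paramU"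
  shows "Bop B0 Bj (y(i := t)) w = Bop B0 Bj y w + (t - y i) *\<^sub>R Bj i w"
proof -
  have "(\<lambda>k. (y(i := t)) k *\<^sub>R Bj k w) =
      (\<lambda>k. y k *\<^sub>R Bj k w + (if k = i then (t - y i) *\<^sub>R Bj k w else 0))"
    by (auto simp: fun_eq_iff algebra_simps)
  moreover have single: "(\<lambda>k. if k = i then (t - y i) *\<^sub>R Bj k w else 0) sums ((t - y i) *\<^sub>R Bj i w)"
    by (rule sums_single)
  ultimately have "(\<Sum>k. (y(i := t)) k *\<^sub>R Bj k w) = (\<Sum>k. y k *\<^sub>R Bj k w) + (t - y i) *\<^sub>R Bj i w"
    using suminf_add[OF summable_Bj_series[OF assms] sums_summable[OF single]] sums_unique[OF single]
    by simp
  then show ?thesis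
    by (simp add: Bop_def)
qed

lemma linear_Bop:
  assumes "y \<in> paramU"
  shows "linear (Bop B0 Bj y)"
proof
  fix v w :: 'x and c :: real
  have "(\<Sum>k. y k *\<^sub>R Bj k (v + w)) = (\<Sum>k. y k *\<^sub>R Bj k v) + (\<Sum>k. y k *\<^sub>R Bj k w)"
    by (simp add: suminf_add[OF summable_Bj_series[OF assms] summable_Bj_series[OF assms]]
        linear_simps[OF Bj_lin] scaleR_add_right)
  then show "Bop B0 Bj y (v + w) = Bop B0 Bj y v + Bop B0 Bj y w"
    by (simp add: Bop_def linear_simps[OF B0_lin] algebra_simps)
  have "(\<Sum>k. y k *\<^sub>R Bj k (c *\<^sub>R w)) = c *\<^sub>R (\<Sum>k. y k *\<^sub>R Bj k w)"
    by (simp add: suminf_scaleR_right[OF summable_Bj_series[OF assms]] linear_simps[OF Bj_lin] mult.commute)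
  then show "Bop B0 Bj y (c *\<^sub>R w) = c *\<^sub>R Bop B0 Bj y w"
    by (simp add: Bop_def linear_simps[OF B0_lin] algebra_simps)
qed

lemma Bop_Binv: "y \<in> paramU \<Longrightarrow> Bop B0 Bj y (Binv y g) = g"
  unfolding Binv_def using B_bij by (meson bij_inv_eq_iff)

lemma Binv_Bop: "y \<in> paramU \<Longrightarrow> Binv y (Bop B0 Bj y w) = w"
  unfolding Binv_def using B_bij by (metis bij_is_inj inv_f_f)

lemma norm_Binv_le: "y \<in> paramU \<Longrightarrow> norm (Binv y g) \<le> norm g / \<beta>1"
  unfolding Binv_def by (rule B_inv_bound)

lemma bounded_linear_Binv:
  assumes y: "y \<in> paramU"
  shows "bounded_linear (Binv y)"
proof -
  interpret B: linear "Bop B0 Bj y"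
    by (rule linear_Bop[OF y])
  have "linear (Binv y)"
  proof
    fix v w :: 'y and c :: real
    show "Binv y (v + w) = Binv y v + Binv y w"
      by (metis B.add Binv_Bop Bop_Binv y)
    show "Binv y (c *\<^sub>R w) = c *\<^sub>R Binv y w"
      by (metis B.scale Binv_Bop Bop_Binv y)
  qed
  then show ?thesis
    using norm_Binv_le[OF y]
    by (intro bounded_linear_intro[where K="1/\<beta>1"]) (simp_all add: linear_add linear_scale)
qed

lemma norm_Binv_Bj_le:
  assumes "y \<in> paramU"
  shows "norm (Binv y (Bj j w)) \<le> b j * norm w"
proof -
  have "norm (Bj j w) / \<beta>1 \<le> b j * norm w"
    using Bj_bound[of j w] \<beta>1_pos by (simp add: divide_le_eq mult.commute mult.left_commute)
  then show ?thesis
    using norm_Binv_le[OF assms, of "Bj j w"] by linarith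
qed

lemma Binv_fun_upd:
  assumes y: "y \<in> paramU" and t: "t \<in> param_interval"
  shows "Binv (y(i := t)) g = Binv y g - (t - y i) *\<^sub>R Binv y (Bj i (Binv (y(i := t)) g))"
proof -
  interpret L: bounded_linear "Binv y"
    by (rule bounded_linear_Binv[OF y])
  define h where "h = Binv (y(i := t)) g"
  have "Bop B0 Bj y h + (t - y i) *\<^sub>R Bj i h = g"
    using Bop_Binv[OF fun_upd_in_paramU[OF y t]] Bop_fun_upd[OF y] by (simp add: h_def)
  then have "h = Binv y (g - (t - y i) *\<^sub>R Bj i h)"
    by (metis Binv_Bop[OF y] add_diff_cancel_right')
  then show ?thesis
    by (simp add: h_def L.diff L.scale)
qed

lemma tendsto_Binv_fun_upd:
  assumes y: "y \<in> paramU" and g: "(g \<longlongrightarrow> g (y i)) (at (y i) within param_interval)"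
  shows "((\<lambda>t. Binv (y(i := t)) (g t)) \<longlongrightarrow> Binv y (g (y i))) (at (y i) within param_interval)"
proof -
  interpret L: bounded_linear "Binv y"
    by (rule bounded_linear_Binv[OF y])
  define h where "h t = Binv (y(i := t)) (g t)" for t
  have "norm (h t - Binv y (g (y i))) \<le> norm (g t - g (y i)) / \<beta>1 + \<bar>t - y i\<bar> * (b i * (norm (g t) / \<beta>1))"
    if t: "t \<in> param_interval" for t
  proof -
    have "norm (Binv y (Bj i (h t))) \<le> b i * norm (h t)"
      by (rule norm_Binv_Bj_le[OF y])
    also have "\<dots> \<le> b i * (norm (g t) / \<beta>1)"
      unfolding h_def
      by (rule mult_left_mono[OF norm_Binv_le[OF fun_upd_in_paramU[OF y t]] b_nonneg])
    finally have "\<bar>t - y i\<bar> * norm (Binv y (Bj i (h t))) \<le> \<bar>t - y i\<bar> * (b i * (norm (g t) / \<beta>1))"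
      by (rule mult_left_mono) simp
    moreover have "h t - Binv y (g (y i)) = Binv y (g t - g (y i)) - (t - y i) *\<^sub>R Binv y (Bj i (h t))"
      using Binv_fun_upd[OF y t, where i=i and g="g t"] by (simp add: h_def L.diff)
    then have "norm (h t - Binv y (g (y i))) \<le>
        norm (Binv y (g t - g (y i))) + norm ((t - y i) *\<^sub>R Binv y (Bj i (h t)))"
      by (simp only: norm_triangle_ineq4)
    ultimately show ?thesis
      using norm_Binv_le[OF y, of "g t - g (y i)"] by simp
  qed
  then have "\<forall>\<^sub>F t in at (y i) within param_interval. norm (h t - Binv y (g (y i))) \<le>
      norm (g t - g (y i)) / \<beta>1 + \<bar>t - y i\<bar> * (b i * (norm (g t) / \<beta>1))"
    by (auto simp: eventually_at_filter)
  moreover have "((\<lambda>t. norm (g t - g (y i)) / \<beta>1 + \<bar>t - y i\<bar> * (b i * (norm (g t) / \<beta>1))) \<longlongrightarrow> 0)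
      (at (y i) within param_interval)"
    using g \<beta>1_pos by (auto intro!: tendsto_eq_intros simp: LIM_zero_iff)
  ultimately have "((\<lambda>t. h t - Binv y (g (y i))) \<longlongrightarrow> 0) (at (y i) within param_interval)"
    by (rule Lim_null_comparison)
  then show ?thesis
    by (simp add: h_def LIM_zero_iff)
qed

text \<open>By \<open>Binv_fun_upd\<close>, \<open>Binv (y(i := t)) (g t)\<close> is \<open>Binv y (g t)\<close> minus \<open>t - y i\<close> times a
  function of \<open>t\<close> that is continuous at \<open>y i\<close>.\<close>
lemma has_vector_derivative_Binv_fun_upd:
  assumes y: "y \<in> paramU" and g: "(g has_vector_derivative g') (at (y i) within param_interval)"
  shows "((\<lambda>t. Binv (y(i := t)) (g t)) has_vector_derivative Binv y (g' - Bj i (Binv y (g (y i)))))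
    (at (y i) within param_interval)"
proof -
  interpret L: bounded_linear "Binv y"
    by (rule bounded_linear_Binv[OF y])
  interpret Bi: bounded_linear "Bj i"
    by (rule Bj_lin)
  define k where "k t = Binv y (Bj i (Binv (y(i := t)) (g t)))" for t
  have "((\<lambda>t. Binv (y(i := t)) (g t)) \<longlongrightarrow> Binv y (g (y i))) (at (y i) within param_interval)"
    using has_vector_derivative_continuous[OF g]
    by (intro tendsto_Binv_fun_upd[OF y]) (simp add: continuous_within)
  then have "(k \<longlongrightarrow> k (y i)) (at (y i) within param_interval)"
    unfolding k_def by (intro L.tendsto Bi.tendsto) simp
  then have "((\<lambda>t. Binv y (g t) - (t - y i) *\<^sub>R k t) has_vector_derivative Binv y g' - k (y i))
      (at (y i) within param_interval)"
    by (intro has_vector_derivative_diff L.has_vector_derivative g has_vector_derivative_scaleR_continuous)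
  moreover have "Binv y g' - k (y i) = Binv y (g' - Bj i (Binv y (g (y i))))"
    by (simp add: k_def L.diff)
  ultimately have D: "((\<lambda>t. Binv y (g t) - (t - y i) *\<^sub>R k t) has_vector_derivative
      Binv y (g' - Bj i (Binv y (g (y i))))) (at (y i) within param_interval)"
    by simp
  have eq: "Binv y (g t) - (t - y i) *\<^sub>R k t = Binv (y(i := t)) (g t)" if "t \<in> param_interval" for t
    unfolding k_def by (rule Binv_fun_upd[OF y that, symmetric])
  show ?thesis
    by (rule has_vector_derivative_transform_within[OF D zero_less_one paramU_coord[OF y]]) (rule eq)
qed

end

lemma norm_sum_list_le: "norm (\<Sum>x\<leftarrow>xs. f x) \<le> (\<Sum>x\<leftarrow>xs. norm (f x))"
  by (induction xs) (auto intro: order_trans[OF norm_triangle_ineq])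

fun insertions :: "'a \<Rightarrow> 'a list \<Rightarrow> 'a list list" where
  "insertions i [] = [[i]]"
| "insertions i (k # w) = (i # k # w) # map ((#) k) (insertions i w)"

text \<open>The \<open>(length js)!\<close> orderings of \<open>js\<close>, repeated entries of \<open>js\<close> being told apart.\<close>
fun arrangements :: "'a list \<Rightarrow> 'a list list" where
  "arrangements [] = [[]]"
| "arrangements (i # js) = concat (map (insertions i) (arrangements js))"

lemma length_insertions: "length (insertions i w) = Suc (length w)"
  by (induction w) auto

lemma mset_insertions: "w' \<in> set (insertions i w) \<Longrightarrow> mset w' = add_mset i (mset w)"
  by (induction w arbitrary: w') auto

lemma mset_arrangements: "w \<in> set (arrangements js) \<Longrightarrow> mset w = mset js"
  by (induction js arbitrary: w) (auto simp: mset_insertions)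

lemma length_arrangements: "length (arrangements js) = fact (length js)"
proof (induction js)
  case Nil
  then show ?case by simp
next
  case (Cons i js)
  have "length (arrangements (i # js)) = (\<Sum>w\<leftarrow>arrangements js. Suc (length w))"
    by (simp add: length_concat length_insertions o_def)
  also have "\<dots> = (\<Sum>w\<leftarrow>arrangements js. Suc (length js))"
    by (intro arg_cong[where f=sum_list] map_cong refl) (metis mset_arrangements size_mset)
  finally show ?case
    using Cons by (simp add: sum_list_triv)
qed

lemma prod_list_arrangements:
  "w \<in> set (arrangements js) \<Longrightarrow> prod_list (map c w) = prod_list (map (c :: _ \<Rightarrow> 'b::comm_monoid_mult) js)"
  by (metis mset_arrangements mset_map prod_mset_prod_list)

lemma linear_sum_list: "linear L \<Longrightarrow> L (\<Sum>x\<leftarrow>xs. f x) = (\<Sum>x\<leftarrow>xs. L (f x))"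
  by (induction xs) (simp_all add: linear_add linear_0)

lemma pderiv_tower_minus_const:
  assumes "pderiv_tower n F"
  shows "pderiv_tower n (\<lambda>js z. F js z - (if js = [] then c else 0))"
  using assms unfolding pderiv_tower_def has_pderiv_def
  by (auto intro!: derivative_eq_intros)

context affine_parametric_operator
begin

fun resolvent_chain :: "'y \<Rightarrow> nat list \<Rightarrow> (nat \<Rightarrow> real) \<Rightarrow> 'x" where
  "resolvent_chain f [] y = Binv y f"
| "resolvent_chain f (k # w) y = Binv y (Bj k (resolvent_chain f w y))"

lemma has_pderiv_resolvent_chain:
  assumes y: "y \<in> paramU"
  shows "has_pderiv (resolvent_chain f w) (- (\<Sum>w'\<leftarrow>insertions i w. resolvent_chain f w' y)) i y"
  unfolding has_pderiv_def
proof (induction w)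
  case Nil
  interpret L: bounded_linear "Binv y"
    by (rule bounded_linear_Binv[OF y])
  have "Binv y (0 - Bj i (Binv y f)) = - (\<Sum>w'\<leftarrow>insertions i []. resolvent_chain f w' y)"
    by (simp add: L.neg)
  then show ?case
    unfolding resolvent_chain.simps(1)
    by (rule has_vector_derivative_eq_rhs[OF has_vector_derivative_Binv_fun_upd[OF y has_vector_derivative_const]])
next
  case (Cons k w)
  interpret L: bounded_linear "Binv y"
    by (rule bounded_linear_Binv[OF y])
  interpret Bk: bounded_linear "Bj k"
    by (rule Bj_lin)
  have "Binv y (Bj k (\<Sum>w'\<leftarrow>insertions i w. resolvent_chain f w' y)) =
      (\<Sum>w'\<leftarrow>insertions i w. resolvent_chain f (k # w') y)"
    by (simp add: linear_sum_list[OF Bk.linear] linear_sum_list[OF L.linear] o_def)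
  then have "Binv y (Bj k (- (\<Sum>w'\<leftarrow>insertions i w. resolvent_chain f w' y)) -
        Bj i (Binv y (Bj k (resolvent_chain f w (y(i := y i)))))) =
      - (\<Sum>w'\<leftarrow>insertions i (k # w). resolvent_chain f w' y)"
    by (simp add: L.diff L.neg Bk.neg o_def)
  then show ?case
    unfolding resolvent_chain.simps(2)
    by (rule has_vector_derivative_eq_rhs[OF
          has_vector_derivative_Binv_fun_upd[OF y Bk.has_vector_derivative[OF Cons.IH]]])
qed

lemma norm_resolvent_chain_le:
  "y \<in> paramU \<Longrightarrow> norm (resolvent_chain f w y) \<le> prod_list (map b w) * (norm f / \<beta>1)"
proof (induction w)
  case Nil
  then show ?case by (simp add: norm_Binv_le)
next
  case (Cons k w)
  have "norm (resolvent_chain f (k # w) y) \<le> b k * norm (resolvent_chain f w y)"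
    using norm_Binv_Bj_le[OF Cons.prems] by simp
  also have "\<dots> \<le> b k * (prod_list (map b w) * (norm f / \<beta>1))"
    using Cons b_nonneg[of k] by (intro mult_left_mono) auto
  finally show ?case
    by (simp add: mult.assoc)
qed

definition sol_deriv :: "'y \<Rightarrow> nat list \<Rightarrow> (nat \<Rightarrow> real) \<Rightarrow> 'x" where
  "sol_deriv f js y = (-1) ^ length js *\<^sub>R (\<Sum>w\<leftarrow>arrangements js. resolvent_chain f w y)"

lemma sol_deriv_Nil: "sol_deriv f [] y = Binv y f"
  by (simp add: sol_deriv_def)

lemma pderiv_tower_sol_deriv: "pderiv_tower n (sol_deriv f)"
  unfolding pderiv_tower_def
proof (intro allI impI)
  fix js :: "nat list" and i y
  assume y: "y \<in> paramU"
  have "has_pderiv (\<lambda>z. \<Sum>w\<leftarrow>arrangements js. resolvent_chain f w z)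
      (\<Sum>w\<leftarrow>arrangements js. - (\<Sum>w'\<leftarrow>insertions i w. resolvent_chain f w' y)) i y"
    by (intro has_pderiv_sum_list has_pderiv_resolvent_chain[OF y])
  then have "has_pderiv (\<lambda>z. \<Sum>w\<leftarrow>arrangements js. resolvent_chain f w z)
      (- (\<Sum>w\<leftarrow>arrangements (i # js). resolvent_chain f w y)) i y"
    by (simp add: sum_list_map_concat uminus_sum_list_map o_def)
  then show "has_pderiv (sol_deriv f js) (sol_deriv f (i # js) y) i y"
    unfolding sol_deriv_def has_pderiv_def
    by (auto dest: bounded_linear.has_vector_derivative[OF bounded_linear_scaleR_right])
qed

lemma norm_sol_deriv_le:
  assumes y: "y \<in> paramU"
  shows "norm (sol_deriv f js y) \<le> fact (length js) * prod_list (map b js) * (norm f / \<beta>1)"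
proof -
  have "norm (sol_deriv f js y) \<le> (\<Sum>w\<leftarrow>arrangements js. norm (resolvent_chain f w y))"
    unfolding sol_deriv_def by (simp add: norm_sum_list_le)
  also have "\<dots> \<le> (\<Sum>w\<leftarrow>arrangements js. prod_list (map b js) * (norm f / \<beta>1))"
    by (intro sum_list_mono) (metis norm_resolvent_chain_le[OF y] prod_list_arrangements)
  finally show ?thesis
    by (simp add: sum_list_triv length_arrangements)
qed

definition sol_err_deriv :: "'y \<Rightarrow> 'x \<Rightarrow> nat list \<Rightarrow> (nat \<Rightarrow> real) \<Rightarrow> 'x" where
  "sol_err_deriv f u js y = sol_deriv f js y - (if js = [] then u else 0)"

lemma pderiv_tower_sol_err_deriv: "pderiv_tower n (sol_err_deriv f u)"
  unfolding sol_err_deriv_def[abs_def] by (rule pderiv_tower_minus_const[OF pderiv_tower_sol_deriv])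

lemma norm_sol_err_deriv_le:
  assumes y: "y \<in> paramU"
  shows "norm (sol_err_deriv f u js y) \<le> fact (length js) * prod_list (map b js) * (norm f / \<beta>1 + norm u)"
proof (cases "js = []")
  case True
  then show ?thesis
    using norm_sol_deriv_le[OF y, of f js] norm_triangle_ineq4[of "sol_deriv f [] y" u]
    by (simp add: sol_err_deriv_def)
next
  case False
  have "prod_list (map b js) \<ge> 0"
    by (rule prod_list_nonneg) (use b_nonneg in auto)
  then have "fact (length js) * prod_list (map b js) * (norm f / \<beta>1) \<le>
      fact (length js) * prod_list (map b js) * (norm f / \<beta>1 + norm u)"
    by (intro mult_left_mono) auto
  then show ?thesis
    using False norm_sol_deriv_le[OF y, of f js] by (simp add: sol_err_deriv_def)
qed

end

section \<open>The misfit functional\<close>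

lemma abs_inner_bounded_linear_le:
  assumes "bounded_linear L"
  shows "\<bar>inner (L v) (L w)\<bar> \<le> (onorm L)\<^sup>2 * (norm v * norm w)"
proof -
  have "\<bar>inner (L v) (L w)\<bar> \<le> norm (L v) * norm (L w)"
    by (rule Cauchy_Schwarz_ineq2)
  also have "\<dots> \<le> (onorm L * norm v) * (onorm L * norm w)"
    using onorm[OF assms] onorm_pos_le[OF assms] by (intro mult_mono) auto
  finally show ?thesis
    by (simp add: power2_eq_square ac_simps)
qed

definition misfit_form :: "('x::real_normed_vector \<Rightarrow> 'h::real_inner) \<Rightarrow> ('x \<Rightarrow> 'l::real_inner) \<Rightarrow>
    real \<Rightarrow> real \<Rightarrow> 'x \<Rightarrow> 'x \<Rightarrow> real" where
  "misfit_form J ET \<alpha>1 \<alpha>2 v w = \<alpha>1 / 2 * inner (J v) (J w) + \<alpha>2 / 2 * inner (ET v) (ET w)"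

context
  fixes J :: "'x::real_normed_vector \<Rightarrow> 'h::real_inner" and ET :: "'x \<Rightarrow> 'l::real_inner"
  assumes J: "bounded_linear J" and ET: "bounded_linear ET"
begin

lemma abs_misfit_form_le:
  "\<bar>misfit_form J ET \<alpha>1 \<alpha>2 v w\<bar> \<le>
    (\<bar>\<alpha>1\<bar> * (onorm J)\<^sup>2 + \<bar>\<alpha>2\<bar> * (onorm ET)\<^sup>2) / 2 * (norm v * norm w)"
proof -
  have "\<bar>misfit_form J ET \<alpha>1 \<alpha>2 v w\<bar> \<le>
      \<bar>\<alpha>1\<bar> / 2 * \<bar>inner (J v) (J w)\<bar> + \<bar>\<alpha>2\<bar> / 2 * \<bar>inner (ET v) (ET w)\<bar>"
    unfolding misfit_form_def by (rule order_trans[OF abs_triangle_ineq]) (simp add: abs_mult)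
  also have "\<dots> \<le> \<bar>\<alpha>1\<bar> / 2 * ((onorm J)\<^sup>2 * (norm v * norm w)) +
      \<bar>\<alpha>2\<bar> / 2 * ((onorm ET)\<^sup>2 * (norm v * norm w))"
    using abs_inner_bounded_linear_le[OF J] abs_inner_bounded_linear_le[OF ET]
    by (intro add_mono mult_left_mono) auto
  finally show ?thesis
    by (simp add: field_simps)
qed

lemma bounded_bilinear_misfit_form: "bounded_bilinear (misfit_form J ET \<alpha>1 \<alpha>2)"
proof
  interpret J: bounded_linear J by (rule J)
  interpret ET: bounded_linear ET by (rule ET)
  fix a a' b b' :: 'x and r :: real
  show "misfit_form J ET \<alpha>1 \<alpha>2 (a + a') b = misfit_form J ET \<alpha>1 \<alpha>2 a b + misfit_form J ET \<alpha>1 \<alpha>2 a' b"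
    and "misfit_form J ET \<alpha>1 \<alpha>2 a (b + b') = misfit_form J ET \<alpha>1 \<alpha>2 a b + misfit_form J ET \<alpha>1 \<alpha>2 a b'"
    and "misfit_form J ET \<alpha>1 \<alpha>2 (r *\<^sub>R a) b = r *\<^sub>R misfit_form J ET \<alpha>1 \<alpha>2 a b"
    and "misfit_form J ET \<alpha>1 \<alpha>2 a (r *\<^sub>R b) = r *\<^sub>R misfit_form J ET \<alpha>1 \<alpha>2 a b"
    by (simp_all add: misfit_form_def J.add ET.add J.scale ET.scale inner_add_left inner_add_right algebra_simps)
  show "\<exists>K. \<forall>a b. norm (misfit_form J ET \<alpha>1 \<alpha>2 a b) \<le> norm a * norm b * K"
  proof (intro exI allI)
    fix a b :: 'x
    show "norm (misfit_form J ET \<alpha>1 \<alpha>2 a b) \<le> norm a * norm b * ((\<bar>\<alpha>1\<bar> * (onorm J)\<^sup>2 + \<bar>\<alpha>2\<bar> * (onorm ET)\<^sup>2) / 2)"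
      using abs_misfit_form_le[of \<alpha>1 \<alpha>2 a b] by (simp add: ac_simps)
  qed
qed

end

lemma Phi_eq_misfit_form:
  "\<theta> * Phi \<alpha>1 \<alpha>2 J ET B0 Bj f uhat y =
    misfit_form J ET (\<theta> * \<alpha>1) (\<theta> * \<alpha>2) (inv (Bop B0 Bj y) f - uhat) (inv (Bop B0 Bj y) f - uhat)"
  by (simp add: Phi_def misfit_form_def power2_norm_eq_inner Let_def algebra_simps)

context affine_parametric_operator
begin

lemma theta_Phi_eq_misfit_form:
  fixes J :: "'x \<Rightarrow> 'h::real_inner" and ET :: "'x \<Rightarrow> 'l::real_inner"
  shows "\<theta> * Phi \<alpha>1 \<alpha>2 J ET B0 Bj f uhat y =
    misfit_form J ET (\<theta> * \<alpha>1) (\<theta> * \<alpha>2) (sol_err_deriv f uhat [] y) (sol_err_deriv f uhat [] y)"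
  by (simp add: Phi_eq_misfit_form sol_err_deriv_def sol_deriv_Nil Binv_def)

lemma pderiv_tower_theta_Phi:
  fixes J :: "'x \<Rightarrow> 'h::real_inner" and ET :: "'x \<Rightarrow> 'l::real_inner"
  assumes "bounded_linear J" and "bounded_linear ET"
  shows "pderiv_tower n (\<lambda>js. pdiffs js (\<lambda>z. \<theta> * Phi \<alpha>1 \<alpha>2 J ET B0 Bj f uhat z))"
  unfolding theta_Phi_eq_misfit_form
  by (rule pderiv_tower_bilinear[OF bounded_bilinear_misfit_form[OF assms]
        pderiv_tower_sol_err_deriv pderiv_tower_sol_err_deriv])

lemma abs_pdiffs_theta_Phi_le:
  fixes J :: "'x \<Rightarrow> 'h::real_inner" and ET :: "'x \<Rightarrow> 'l::real_inner"
  assumes J: "bounded_linear J" and J_le: "\<And>w. norm (J w) \<le> norm w" and ET: "bounded_linear ET"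
    and \<alpha>: "\<alpha>1 \<ge> 0" "\<alpha>2 \<ge> 0" and \<theta>: "\<theta> \<ge> 0" and z: "z \<in> paramU"
  shows "\<bar>pdiffs js (\<lambda>z. \<theta> * Phi \<alpha>1 \<alpha>2 J ET B0 Bj f uhat z) z\<bar> \<le>
    (\<alpha>1 + \<alpha>2 * (onorm ET)\<^sup>2) / 2 * (norm f / \<beta>1 + norm uhat)\<^sup>2 * \<theta> * fact (length js + 1) * prod_list (map b js)"
proof -
  have "onorm J \<le> 1"
    by (rule onorm_bound) (simp_all add: J_le)
  then have "\<theta> * \<alpha>1 * (onorm J)\<^sup>2 \<le> \<theta> * \<alpha>1"
    using onorm_pos_le[OF J] \<theta> \<alpha> by (simp add: mult_left_le power_le_one)
  then have "(\<bar>\<theta> * \<alpha>1\<bar> * (onorm J)\<^sup>2 + \<bar>\<theta> * \<alpha>2\<bar> * (onorm ET)\<^sup>2) / 2 \<le> \<theta> * (\<alpha>1 + \<alpha>2 * (onorm ET)\<^sup>2) / 2"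
    using \<theta> \<alpha> by (simp add: abs_mult algebra_simps)
  then have "\<bar>misfit_form J ET (\<theta> * \<alpha>1) (\<theta> * \<alpha>2) v w\<bar> \<le> \<theta> * (\<alpha>1 + \<alpha>2 * (onorm ET)\<^sup>2) / 2 * (norm v * norm w)"
    for v w
    by (rule order_trans[OF abs_misfit_form_le[OF J ET] mult_right_mono]) simp
  from abs_pdiffs_bilinear_le[OF bounded_bilinear_misfit_form[OF J ET] this
      pderiv_tower_sol_err_deriv pderiv_tower_sol_err_deriv norm_sol_err_deriv_le norm_sol_err_deriv_le
      _ b_nonneg z]
  show ?thesis
    using \<theta> \<alpha> by (simp add: theta_Phi_eq_misfit_form power2_eq_square ac_simps)
qed

end

section \<open>Numerical estimates\<close>

lemma exp_one_bounds: "2718/1000 < exp (1::real)" "exp (1::real) < 272/100"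
  using e_approx_32 by (simp_all add: abs_if split: if_split_asm)

lemma sum_power_mult_Suc_Suc_le:
  fixes q :: real
  assumes "0 \<le> q" "q < 1"
  shows "(\<Sum>i\<le>n. q ^ i * ((real i + 1) * (real i + 2))) \<le> 2 / (1 - q) ^ 3"
proof -
  define P where "P m = 2 * q\<^sup>2 + (2 * real m + 6) * q * (1 - q) + (real m + 2) * (real m + 3) * (1 - q)\<^sup>2"
    for m
  have P_Suc: "P m = (1 - q) ^ 3 * ((real m + 2) * (real m + 3)) + q * P (Suc m)" for m
    by (simp add: P_def power2_eq_square power3_eq_cube algebra_simps)
  \<comment> \<open>\<open>q ^ (m + 1) * P m\<close> is \<open>(1 - q) ^ 3\<close> times the tail after the \<open>m\<close>-th term of the series
    \<open>\<Sum>i. q ^ i (i + 1) (i + 2) = 2 / (1 - q) ^ 3\<close>\<close>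
  have tail: "(1 - q) ^ 3 * (\<Sum>i\<le>m. q ^ i * ((real i + 1) * (real i + 2))) + q ^ (m + 1) * P m = 2" for m
  proof (induction m)
    case 0
    then show ?case
      by (simp add: P_def power2_eq_square power3_eq_cube algebra_simps)
  next
    case (Suc m)
    have "(1 - q) ^ 3 * (\<Sum>i\<le>Suc m. q ^ i * ((real i + 1) * (real i + 2))) + q ^ (Suc m + 1) * P (Suc m) =
        (1 - q) ^ 3 * (\<Sum>i\<le>m. q ^ i * ((real i + 1) * (real i + 2))) +
        q ^ (m + 1) * ((1 - q) ^ 3 * ((real m + 2) * (real m + 3)) + q * P (Suc m))"
      by (simp add: algebra_simps)
    then show ?case
      using Suc by (simp only: P_Suc[symmetric])
  qed
  moreover have "q ^ (n + 1) * P n \<ge> 0"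
    using assms unfolding P_def by (intro mult_nonneg_nonneg add_nonneg_nonneg) auto
  ultimately have "(1 - q) ^ 3 * (\<Sum>i\<le>n. q ^ i * ((real i + 1) * (real i + 2))) \<le> 2"
    using tail[of n] by linarith
  then show ?thesis
    using assms by (simp add: field_simps)
qed

lemma sum_binomial_fact_exp_le:
  "(\<Sum>k\<le>n. real (n choose k) * (fact k * exp 1 ^ k * fact (n - k + 2)))
     \<le> fact n * exp 1 ^ n * (2 * exp 1 ^ 3 / (exp 1 - 1) ^ 3)"
proof -
  define e :: real where "e = exp 1"
  define q where "q = 1 / e"
  have e: "e > 1"
    using exp_one_bounds by (simp add: e_def)
  have "real (n choose k) * (fact k * e ^ k * fact (n - k + 2)) =
      fact n * e ^ n * (q ^ (n - k) * ((real (n - k) + 1) * (real (n - k) + 2)))" if "k \<le> n" for k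
  proof -
    have "e ^ k = e ^ n * q ^ (n - k)"
      using that e by (simp add: q_def power_diff field_simps)
    moreover have "(fact (n - k + 2) :: real) = fact (n - k) * ((real (n - k) + 1) * (real (n - k) + 2))"
      by (simp add: numeral_2_eq_2 algebra_simps)
    ultimately show ?thesis
      using that by (simp add: binomial_fact field_simps)
  qed
  then have "(\<Sum>k\<le>n. real (n choose k) * (fact k * e ^ k * fact (n - k + 2))) =
      fact n * e ^ n * (\<Sum>k\<le>n. q ^ (n - k) * ((real (n - k) + 1) * (real (n - k) + 2)))"
    by (simp add: sum_distrib_left)
  also have "(\<Sum>k\<le>n. q ^ (n - k) * ((real (n - k) + 1) * (real (n - k) + 2))) =
      (\<Sum>i\<le>n. q ^ i * ((real i + 1) * (real i + 2)))"
    using sum.atLeastAtMost_rev[of "\<lambda>i. q ^ i * ((real i + 1) * (real i + 2))" 0 n]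
    by (simp add: atLeast0AtMost)
  also have "fact n * e ^ n * \<dots> \<le> fact n * e ^ n * (2 / (1 - q) ^ 3)"
    using e by (intro mult_left_mono sum_power_mult_Suc_Suc_le) (auto simp: q_def)
  also have "2 / (1 - q) ^ 3 = 2 * e ^ 3 / (e - 1) ^ 3"
    using e by (simp add: q_def field_simps)
  finally show ?thesis
    by (simp add: e_def)
qed

lemma power_div_fact_le_exp:
  fixes x :: real
  assumes "x \<ge> 0"
  shows "x ^ m / fact m \<le> exp x"
proof -
  have "x ^ m / fact m \<le> (\<Sum>k\<le>m. x ^ k / fact k)"
    using assms by (intro member_le_sum) auto
  also have "\<dots> \<le> exp x"
    using assms summable_exp_generic[of x]
    by (auto simp: exp_def divide_inverse ac_simps intro!: sum_le_suminf)
  finally show ?thesis .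
qed

text \<open>For \<open>\<kappa> \<ge> 0\<close>, \<open>exp_peak \<kappa> n\<close> is the largest of the first \<open>n + 1\<close> terms \<open>\<kappa>^k/k!\<close> of the
  exponential series.\<close>
definition exp_peak :: "real \<Rightarrow> nat \<Rightarrow> real" where
  "exp_peak \<kappa> n = (\<Prod>i=1..n. max 1 (\<kappa> / real i))"

lemma exp_peak_0 [simp]: "exp_peak \<kappa> 0 = 1"
  and exp_peak_Suc: "exp_peak \<kappa> (Suc n) = exp_peak \<kappa> n * max 1 (\<kappa> / real (Suc n))"
  by (simp_all add: exp_peak_def)

lemma exp_peak_ge_1: "exp_peak \<kappa> n \<ge> 1"
  unfolding exp_peak_def by (rule prod_ge_1) auto

lemma exp_peak_mono: "m \<le> n \<Longrightarrow> exp_peak \<kappa> m \<le> exp_peak \<kappa> n"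
proof (induction n rule: dec_induct)
  case (step n)
  then show ?case
    using exp_peak_ge_1[of \<kappa> n] by (simp add: exp_peak_Suc order_trans[OF _ mult_le_cancel_left1[THEN iffD2]])
qed simp

lemma exp_peak_eq_1: "\<kappa> \<le> 1 \<Longrightarrow> exp_peak \<kappa> n = 1"
  unfolding exp_peak_def by (rule prod.neutral) (auto simp: field_simps)

lemma exp_peak_eq_power_div_fact: "real n < \<kappa> \<Longrightarrow> exp_peak \<kappa> n = \<kappa> ^ n / fact n"
proof (induction n)
  case (Suc n)
  then have "exp_peak \<kappa> (Suc n) = \<kappa> ^ n / fact n * (\<kappa> / real (Suc n))"
    by (simp add: exp_peak_Suc)
  also have "\<dots> = \<kappa> ^ Suc n / fact (Suc n)"
    by (simp add: field_simps)
  finally show ?case .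
qed simp

lemma exp_peak_le_exp: "\<kappa> \<ge> 0 \<Longrightarrow> exp_peak \<kappa> n \<le> exp \<kappa>"
proof (induction n)
  case (Suc n)
  show ?case
  proof (cases "\<kappa> \<le> real (Suc n)")
    case True
    then have "max 1 (\<kappa> / real (Suc n)) = 1"
      by (auto simp: field_simps)
    then show ?thesis
      using Suc by (simp add: exp_peak_Suc)
  next
    case False
    then have "exp_peak \<kappa> (Suc n) = \<kappa> ^ Suc n / fact (Suc n)"
      by (intro exp_peak_eq_power_div_fact) simp
    also have "\<dots> \<le> exp \<kappa>"
      by (rule power_div_fact_le_exp[OF Suc.prems])
    finally show ?thesis .
  qed
qed simp

lemma exp_majorant_step:
  assumes "\<sigma> \<ge> 0"
  defines "\<kappa> \<equiv> 2 * \<sigma> * exp 1 ^ 2 / (exp 1 - 1) ^ 3"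
  shows "\<sigma> * (\<Sum>k\<le>n. real (n choose k) * (fact k * exp 1 ^ k * exp_peak \<kappa> k * fact (n - k + 2)))
    \<le> fact (Suc n) * exp 1 ^ Suc n * exp_peak \<kappa> (Suc n)"
proof -
  define e :: real where "e = exp 1"
  have e: "e > 1"
    using exp_one_bounds by (simp add: e_def)
  have "(\<Sum>k\<le>n. real (n choose k) * (fact k * e ^ k * exp_peak \<kappa> k * fact (n - k + 2))) \<le>
      (\<Sum>k\<le>n. real (n choose k) * (fact k * e ^ k * fact (n - k + 2)) * exp_peak \<kappa> n)"
    using e by (intro sum_mono) (simp add: exp_peak_mono mult_left_mono ac_simps)
  also have "\<dots> \<le> fact n * e ^ n * (2 * e ^ 3 / (e - 1) ^ 3) * exp_peak \<kappa> n"
    unfolding sum_distrib_right[symmetric] e_def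
    using sum_binomial_fact_exp_le exp_peak_ge_1[of \<kappa> n] by (intro mult_right_mono) auto
  finally have "\<sigma> * (\<Sum>k\<le>n. real (n choose k) * (fact k * e ^ k * exp_peak \<kappa> k * fact (n - k + 2))) \<le>
      e ^ Suc n * exp_peak \<kappa> n * (fact n * \<kappa>)"
    using assms(1) e by (auto simp: \<kappa>_def e_def[symmetric] field_simps power3_eq_cube power2_eq_square
        dest: mult_left_mono[of _ _ \<sigma>])
  also have "\<kappa> \<le> real (Suc n) * max 1 (\<kappa> / real (Suc n))"
    by (cases "\<kappa> / real (Suc n) \<le> 1") (auto simp: field_simps)
  then have "fact n * \<kappa> \<le> fact (Suc n) * max 1 (\<kappa> / real (Suc n))"
    using mult_left_mono[of \<kappa> _ "fact n"] by (simp add: ac_simps)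
  then have "e ^ Suc n * exp_peak \<kappa> n * (fact n * \<kappa>) \<le> e ^ Suc n * exp_peak \<kappa> n * (fact (Suc n) * max 1 (\<kappa> / real (Suc n)))"
    using e exp_peak_ge_1[of \<kappa> n] by (intro mult_left_mono) auto
  finally show ?thesis
    by (simp add: e_def exp_peak_Suc ac_simps)
qed

lemma exp_one_numerics: "2 * exp 1 ^ 2 / (exp 1 - 1) ^ 3 < (3::real)" "5 < (exp 1 ^ 2 :: real)"
proof -
  define e :: real where "e = exp 1"
  have e: "2718/1000 < e" "e < 272/100"
    using exp_one_bounds by (simp_all add: e_def)
  have "2 * e ^ 2 \<le> 2 * (272/100) ^ 2" and "3 * (1718/1000) ^ 3 \<le> 3 * (e - 1) ^ 3"
    using e by (auto intro!: power_mono)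
  then have "2 * e ^ 2 < 3 * (e - 1) ^ 3"
    by (simp add: power2_eq_square power3_eq_cube)
  then show "2 * exp 1 ^ 2 / (exp 1 - 1) ^ 3 < (3::real)"
    using e by (simp add: e_def divide_less_eq)
  show "5 < (exp 1 ^ 2 :: real)"
    using e power_strict_mono[of "2718/1000" e 2] by (simp add: e_def power2_eq_square)
qed

lemma exp_mult_exp_peak_le:
  assumes "\<sigma> \<ge> 0"
  shows "exp \<sigma> * exp_peak (2 * \<sigma> * exp 1 ^ 2 / (exp 1 - 1) ^ 3) n
    \<le> exp (max \<sigma> (\<sigma> * exp 1 ^ 2 + 2 * \<sigma> - 1))"
proof -
  define r :: real where "r = 2 * exp 1 ^ 2 / (exp 1 - 1) ^ 3"
  have r: "0 \<le> r" "r < 3"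
    using exp_one_numerics(1) exp_one_bounds by (simp_all add: r_def)
  have \<kappa>: "2 * \<sigma> * exp 1 ^ 2 / (exp 1 - 1) ^ 3 = \<sigma> * r"
    by (simp add: r_def)
  show ?thesis
  proof (cases "\<sigma> * r \<le> 1")
    case True
    then show ?thesis
      using exp_peak_eq_1[of "\<sigma> * r" n] by (simp add: \<kappa>)
  next
    case False
    \<comment> \<open>then \<open>3 \<sigma> > 1\<close>, and \<open>e\<^sup>2 + 1 - r \<ge> 3\<close> gives \<open>\<sigma> + \<sigma> r \<le> \<sigma> e\<^sup>2 + 2 \<sigma> - 1\<close>\<close>
    have "\<sigma> * r \<le> \<sigma> * 3" and "\<sigma> * 3 \<le> \<sigma> * (exp 1 ^ 2 + 1 - r)"
      using r exp_one_numerics(2) assms by (intro mult_left_mono; simp)+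
    then have "\<sigma> + \<sigma> * r \<le> \<sigma> * exp 1 ^ 2 + 2 * \<sigma> - 1"
      using False by (simp add: algebra_simps)
    moreover have "exp \<sigma> * exp_peak (\<sigma> * r) n \<le> exp \<sigma> * exp (\<sigma> * r)"
      using exp_peak_le_exp[of "\<sigma> * r" n] assms r by simp
    ultimately show ?thesis
      unfolding \<kappa> by (simp add: exp_add[symmetric] order_trans)
  qed
qed

section \<open>Derivatives of the exponential of a smooth function\<close>

context
  fixes g :: "(nat \<Rightarrow> real) \<Rightarrow> real"
  assumes g_smooth: "\<And>n. pderiv_tower n (\<lambda>js. pdiffs js g)"
begin

lemma has_pderiv_exp_comp:
  assumes y: "y \<in> paramU"
  shows "has_pderiv (\<lambda>z. exp (g z)) (exp (g y) * pdiff j g y) j y"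
proof -
  have "((\<lambda>t. g (y(j := t))) has_real_derivative pdiff j g y) (at (y j) within param_interval)"
    using pderiv_towerD[OF g_smooth, of "[]" "Suc 0" y j] y
    by (simp add: pdiffs_Cons has_pderiv_def has_real_derivative_iff_has_vector_derivative)
  from DERIV_chain2[OF DERIV_exp this] show ?thesis
    by (simp add: has_pderiv_def has_real_derivative_iff_has_vector_derivative)
qed

lemma pdiffs_exp_comp_snoc:
  "y \<in> paramU \<Longrightarrow> pdiffs (js @ [j]) (\<lambda>z. exp (g z)) y = pdiffs js (\<lambda>z. exp (g z) * pdiff j g z) y"
  unfolding pdiffs_append
  by (rule pdiffs_cong) (simp_all add: pdiffs_Cons pdiff_eqI[OF _ has_pderiv_exp_comp])

lemma pderiv_tower_pdiff: "pderiv_tower n (\<lambda>js. pdiffs js (pdiff j g))"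
  unfolding pderiv_tower_def
proof (intro allI impI)
  fix js :: "nat list" and i y
  assume "length js < n" "y \<in> paramU"
  then show "has_pderiv (pdiffs js (pdiff j g)) (pdiffs (i # js) (pdiff j g) y) i y"
    using pderiv_towerD[OF g_smooth, of "js @ [j]" "Suc n" y i]
    by (simp add: pdiffs_append pdiffs_Cons)
qed

text \<open>Since \<open>\<partial>\<^sub>j exp g = exp g \<cdot> \<partial>\<^sub>j g\<close>, Leibniz' rule extends the derivatives of \<open>exp g\<close>
  known up to order \<open>n\<close> by one order.\<close>
lemma has_pderiv_pdiffs_exp_comp_snoc:
  assumes tower: "pderiv_tower n (\<lambda>js. pdiffs js (\<lambda>z. exp (g z)))"
    and js: "length js < n" and y: "y \<in> paramU"
  shows "has_pderiv (pdiffs (js @ [j]) (\<lambda>z. exp (g z))) (pdiffs (i # js @ [j]) (\<lambda>z. exp (g z)) y) i y"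
proof -
  define P where "P = (\<lambda>z. exp (g z) * pdiff j g z)"
  have "pderiv_tower n (\<lambda>ks. pdiffs ks (\<lambda>z. pdiffs [] (\<lambda>z. exp (g z)) z * pdiffs [] (pdiff j g) z))"
    by (rule pderiv_tower_bilinear[OF bounded_bilinear_mult tower pderiv_tower_pdiff])
  then have D: "has_pderiv (pdiffs js P) (pdiffs (i # js) P y) i y"
    using pderiv_towerD[OF _ js y, of _ i] by (simp add: P_def)
  have eq: "pdiffs (js @ [j]) (\<lambda>z. exp (g z)) z = pdiffs js P z" if "z \<in> paramU" for z
    using pdiffs_exp_comp_snoc[OF that] by (simp add: P_def)
  have "pdiffs (i # js @ [j]) (\<lambda>z. exp (g z)) y = pdiffs (i # js) P y"
    unfolding pdiffs_Cons by (rule pdiff_cong[OF y eq])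
  then show ?thesis
    using has_pderiv_cong[OF y eq D] by simp
qed

lemma pderiv_tower_exp_comp: "pderiv_tower n (\<lambda>js. pdiffs js (\<lambda>z. exp (g z)))"
proof (induction n)
  case 0
  then show ?case
    by (simp add: pderiv_tower_def)
next
  case (Suc n)
  show ?case
    unfolding pderiv_tower_def
  proof (intro allI impI)
    fix js :: "nat list" and i y
    assume js: "length js < Suc n" and y: "y \<in> paramU"
    show "has_pderiv (pdiffs js (\<lambda>z. exp (g z))) (pdiffs (i # js) (\<lambda>z. exp (g z)) y) i y"
    proof (cases js rule: rev_exhaust)
      case Nil
      then show ?thesis
        using has_pderiv_exp_comp[OF y] pdiff_eqI[OF y has_pderiv_exp_comp[OF y]]
        by (simp add: pdiffs_Cons)
    next
      case (snoc js' j)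
      then show ?thesis
        using has_pderiv_pdiffs_exp_comp_snoc[OF Suc.IH _ y, of js'] js by simp
    qed
  qed
qed

lemma pdiffs_exp_comp_snoc_expansion:
  assumes y: "y \<in> paramU"
  shows "pdiffs (js @ [j]) (\<lambda>z. exp (g z)) y =
    (\<Sum>(p, q)\<leftarrow>bipartitions js. pdiffs p (\<lambda>z. exp (g z)) y * pdiffs (q @ [j]) g y)"
proof -
  have "pdiffs (js @ [j]) (\<lambda>z. exp (g z)) y =
      pdiffs js (\<lambda>z. pdiffs [] (\<lambda>z. exp (g z)) z * pdiffs [] (pdiff j g) z) y"
    by (simp add: pdiffs_exp_comp_snoc[OF y])
  also have "\<dots> = (\<Sum>(p, q)\<leftarrow>bipartitions js. pdiffs p (\<lambda>z. exp (g z)) y * pdiffs q (pdiff j g) y)"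
    by (rule pdiffs_bilinear[OF bounded_bilinear_mult pderiv_tower_exp_comp pderiv_tower_pdiff order_refl y])
  finally show ?thesis
    by (simp add: pdiffs_append pdiffs_Cons)
qed

lemma abs_pdiffs_exp_comp_snoc_le:
  assumes g_le: "\<And>js z. z \<in> paramU \<Longrightarrow> \<bar>pdiffs js g z\<bar> \<le> \<sigma> * fact (length js + 1) * prod_list (map c js)"
    and E_le: "\<And>p. length p \<le> length js \<Longrightarrow> \<bar>pdiffs p (\<lambda>z. exp (g z)) y\<bar> \<le>
      exp \<sigma> * (fact (length p) * exp 1 ^ length p * exp_peak \<kappa> (length p)) * prod_list (map c p)"
    and c: "\<And>j. c j \<ge> 0" and y: "y \<in> paramU"
  shows "\<bar>pdiffs (js @ [j]) (\<lambda>z. exp (g z)) y\<bar> \<le> exp \<sigma> * prod_list (map c (js @ [j])) *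
    (\<sigma> * (\<Sum>k\<le>length js. real (length js choose k) *
      (fact k * exp 1 ^ k * exp_peak \<kappa> k * fact (length js - k + 2))))"
proof -
  define \<phi> where "\<phi> k l = fact k * exp 1 ^ k * exp_peak \<kappa> k * fact (l + 2)" for k l :: nat
  have c_prod: "prod_list (map c xs) \<ge> 0" for xs
    by (rule prod_list_nonneg) (use c in auto)
  have term_le: "\<bar>pdiffs p (\<lambda>z. exp (g z)) y * pdiffs (q @ [j]) g y\<bar> \<le>
      exp \<sigma> * prod_list (map c (js @ [j])) * (\<sigma> * \<phi> (length p) (length q))"
    if pq: "(p, q) \<in> set (bipartitions js)" for p q
  proof -
    have "\<bar>pdiffs p (\<lambda>z. exp (g z)) y\<bar> \<le>
        exp \<sigma> * (fact (length p) * exp 1 ^ length p * exp_peak \<kappa> (length p)) * prod_list (map c p)"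
      using bipartitions_length[OF pq] by (intro E_le) simp
    moreover have "\<bar>pdiffs (q @ [j]) g y\<bar> \<le> \<sigma> * fact (length q + 2) * (prod_list (map c q) * c j)"
      using g_le[OF y, of "q @ [j]"] by (simp add: numeral_2_eq_2)
    ultimately have "\<bar>pdiffs p (\<lambda>z. exp (g z)) y * pdiffs (q @ [j]) g y\<bar> \<le>
        (exp \<sigma> * (fact (length p) * exp 1 ^ length p * exp_peak \<kappa> (length p)) * prod_list (map c p)) *
        (\<sigma> * fact (length q + 2) * (prod_list (map c q) * c j))"
      unfolding abs_mult
      by (rule mult_mono) (use c_prod order_trans[OF zero_le_one exp_peak_ge_1] in \<open>auto intro!: mult_nonneg_nonneg\<close>)
    also have "\<dots> = exp \<sigma> * (prod_list (map c p) * prod_list (map c q) * c j) * (\<sigma> * \<phi> (length p) (length q))"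
      by (simp add: \<phi>_def ac_simps)
    finally show ?thesis
      using prod_list_bipartitions[OF pq, of c] by simp
  qed
  have "\<bar>pdiffs (js @ [j]) (\<lambda>z. exp (g z)) y\<bar> \<le>
      (\<Sum>(p, q)\<leftarrow>bipartitions js. \<bar>pdiffs p (\<lambda>z. exp (g z)) y * pdiffs (q @ [j]) g y\<bar>)"
    unfolding pdiffs_exp_comp_snoc_expansion[OF y]
    using sum_list_abs[of "map (\<lambda>(p, q). pdiffs p (\<lambda>z. exp (g z)) y * pdiffs (q @ [j]) g y) (bipartitions js)"]
    by (simp add: o_def split_def)
  also have "\<dots> \<le>
      (\<Sum>(p, q)\<leftarrow>bipartitions js. exp \<sigma> * prod_list (map c (js @ [j])) * (\<sigma> * \<phi> (length p) (length q)))"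
    by (rule sum_list_mono, clarify, rule term_le)
  also have "\<dots> = exp \<sigma> * prod_list (map c (js @ [j])) *
      (\<sigma> * (\<Sum>k\<le>length js. real (length js choose k) * \<phi> k (length js - k)))"
    using sum_list_bipartitions_binomial[of \<phi> js] by (simp add: split_def sum_list_const_mult)
  finally show ?thesis
    by (simp add: \<phi>_def)
qed

lemma abs_pdiffs_exp_comp_le_exp_peak:
  assumes g_le: "\<And>js z. z \<in> paramU \<Longrightarrow> \<bar>pdiffs js g z\<bar> \<le> \<sigma> * fact (length js + 1) * prod_list (map c js)"
    and c: "\<And>j. c j \<ge> 0" and \<sigma>: "\<sigma> \<ge> 0" and y: "y \<in> paramU"
  defines "\<kappa> \<equiv> 2 * \<sigma> * exp 1 ^ 2 / (exp 1 - 1) ^ 3"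
  shows "\<bar>pdiffs js (\<lambda>z. exp (g z)) y\<bar> \<le>
    exp \<sigma> * (fact (length js) * exp 1 ^ length js * exp_peak \<kappa> (length js)) * prod_list (map c js)"
proof (induction "length js" arbitrary: js rule: less_induct)
  case less
  show ?case
  proof (cases js rule: rev_exhaust)
    case Nil
    have "g y \<le> \<sigma>"
      using g_le[OF y, of "[]"] by simp
    then show ?thesis
      using Nil by simp
  next
    case (snoc js' j)
    have "\<bar>pdiffs p (\<lambda>z. exp (g z)) y\<bar> \<le>
        exp \<sigma> * (fact (length p) * exp 1 ^ length p * exp_peak \<kappa> (length p)) * prod_list (map c p)"
      if "length p \<le> length js'" for p
      using that snoc by (intro less.hyps) simp
    from abs_pdiffs_exp_comp_snoc_le[OF g_le this c y]
    have "\<bar>pdiffs js (\<lambda>z. exp (g z)) y\<bar> \<le> exp \<sigma> * prod_list (map c js) *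
        (\<sigma> * (\<Sum>k\<le>length js'. real (length js' choose k) *
          (fact k * exp 1 ^ k * exp_peak \<kappa> k * fact (length js' - k + 2))))"
      unfolding snoc .
    also have "\<dots> \<le> exp \<sigma> * prod_list (map c js) *
        (fact (Suc (length js')) * exp 1 ^ Suc (length js') * exp_peak \<kappa> (Suc (length js')))"
      using exp_majorant_step[OF \<sigma>, of "length js'"] c unfolding \<kappa>_def[symmetric]
      by (intro mult_left_mono) (auto intro!: mult_nonneg_nonneg prod_list_nonneg)
    finally show ?thesis
      by (simp add: snoc ac_simps)
  qed
qed

lemma abs_pdiffs_exp_comp_le:
  assumes g_le: "\<And>js z. z \<in> paramU \<Longrightarrow> \<bar>pdiffs js g z\<bar> \<le> \<sigma> * fact (length js + 1) * prod_list (map c js)"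
    and c: "\<And>j. c j \<ge> 0" and \<sigma>: "\<sigma> \<ge> 0" and y: "y \<in> paramU"
  shows "\<bar>pdiffs js (\<lambda>z. exp (g z)) y\<bar> \<le>
    exp (max \<sigma> (\<sigma> * exp 1 ^ 2 + 2 * \<sigma> - 1)) * fact (length js) * exp 1 ^ length js * prod_list (map c js)"
proof -
  have "0 \<le> fact (length js) * exp 1 ^ length js * prod_list (map c js)"
    using c by (intro mult_nonneg_nonneg prod_list_nonneg) auto
  then show ?thesis
    using abs_pdiffs_exp_comp_le_exp_peak[OF g_le c \<sigma> y, of js]
      mult_right_mono[OF exp_mult_exp_peak_le[OF \<sigma>]]
    by (smt (verit) ac_simps)
qed

end

lemma prod_list_const_mult: "(\<Prod>x\<leftarrow>xs. c * f x) = c ^ length xs * (\<Prod>x\<leftarrow>xs. f x :: 'a::comm_monoid_mult)"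
  by (induction xs) (simp_all add: ac_simps)

lemma length_idx_list: "\<nu> \<in> multi_indices \<Longrightarrow> length (idx_list \<nu>) = mabs \<nu>"
  by (simp add: idx_list_def length_concat o_def multi_indices_def mabs_def sum_list_distinct_conv_sum_set)

lemma prod_list_idx_list:
  assumes "\<nu> \<in> multi_indices"
  shows "prod_list (map c (idx_list \<nu>)) = mpow c \<nu>"
proof -
  have "prod_list (map c (concat xss)) = (\<Prod>xs\<leftarrow>xss. prod_list (map c xs))" for xss :: "nat list list"
    by (induction xss) simp_all
  then show ?thesis
    using assms
    using prod.distinct_set_conv_list[of "sorted_list_of_set (msupp \<nu>)" "\<lambda>j. c j ^ \<nu> j"]
    by (simp add: idx_list_def o_def multi_indices_def mpow_def)
qed

theorem mainTheorem7:
  fixes J :: "'x::{real_inner,complete_space} \<Rightarrow> 'h::{real_inner,complete_space}"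
    and Dt :: "'x \<Rightarrow> 'g::{real_inner,complete_space}"
    and ET :: "'x \<Rightarrow> 'l::{real_inner,complete_space}"
    and B0 :: "'x \<Rightarrow> 'y::{real_inner,complete_space}"
    and Bj :: "nat \<Rightarrow> 'x \<Rightarrow> 'y"
    and b :: "nat \<Rightarrow> real"
    and \<beta>1 \<alpha>1 \<alpha>2 \<theta> :: real
    and f :: 'y and uhat :: 'x
  assumes J_lin: "bounded_linear J" and Dt_lin: "bounded_linear Dt"
    and X_norm: "\<And>w. (norm w)\<^sup>2 = (norm (J w))\<^sup>2 + (norm (Dt w))\<^sup>2"
    and ET_lin: "bounded_linear ET"
    and B0_lin: "bounded_linear B0"
    and Bj_lin: "\<And>j. bounded_linear (Bj j)"
    and b_nonneg: "\<And>j. b j \<ge> 0" and b_summable: "summable b"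
    and Bj_bound: "\<And>j w. norm (Bj j w) \<le> \<beta>1 * b j * norm (J w)"
    and \<beta>1_pos: "\<beta>1 > 0"
    and B_bij: "\<And>y. y \<in> paramU \<Longrightarrow> bij (Bop B0 Bj y)"
    and B_inv_bound: "\<And>y g. y \<in> paramU \<Longrightarrow> norm (inv (Bop B0 Bj y) g) \<le> norm g / \<beta>1"
    and \<alpha>_nonneg: "\<alpha>1 \<ge> 0" "\<alpha>2 \<ge> 0" and \<alpha>_pos: "\<alpha>1 + \<alpha>2 > 0"
    and \<theta>_pos: "\<theta> > 0"
  shows "\<forall>y\<in>paramU. \<forall>\<nu>\<in>multi_indices.
    (let \<sigma> = (\<alpha>1 + \<alpha>2 * (onorm ET)\<^sup>2) / 2 * (norm f / \<beta>1 + norm uhat)\<^sup>2 * \<theta> in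
     \<bar>dnu \<nu> (\<lambda>y'. exp (\<theta> * Phi \<alpha>1 \<alpha>2 J ET B0 Bj f uhat y')) y\<bar>
       \<le> exp (max \<sigma> (\<sigma> * exp 1 ^ 2 + 2 * \<sigma> - 1)) * fact (mabs \<nu>)
          * mpow (\<lambda>j. exp 1 * b j) \<nu>)"
proof (intro ballI)
  fix y \<nu>
  assume y: "y \<in> paramU" and \<nu>: "\<nu> \<in> multi_indices"
  \<comment> \<open>\<open>Dt\<close> enters only through \<open>\<parallel>J w\<parallel> \<le> \<parallel>w\<parallel>\<close>; the bound holds without \<open>\<alpha>1 + \<alpha>2 > 0\<close>.\<close>
  have J_le: "norm (J w) \<le> norm w" for w
    by (rule power2_le_imp_le) (use X_norm[of w] in auto)
  have Bj_le: "norm (Bj j w) \<le> \<beta>1 * b j * norm w" for j w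
    using order_trans[OF Bj_bound[of j w] mult_left_mono[OF J_le, of "\<beta>1 * b j" w]] \<beta>1_pos b_nonneg[of j]
    by simp
  interpret B: affine_parametric_operator B0 Bj b \<beta>1
    by (rule affine_parametric_operator.intro)
      (fact B0_lin Bj_lin b_nonneg b_summable Bj_le \<beta>1_pos B_bij B_inv_bound)+
  have "(\<alpha>1 + \<alpha>2 * (onorm ET)\<^sup>2) / 2 * (norm f / \<beta>1 + norm uhat)\<^sup>2 * \<theta> \<ge> 0"
    using \<theta>_pos \<alpha>_nonneg by simp
  from abs_pdiffs_exp_comp_le[OF B.pderiv_tower_theta_Phi[OF J_lin ET_lin]
      B.abs_pdiffs_theta_Phi_le[OF J_lin J_le ET_lin \<alpha>_nonneg less_imp_le[OF \<theta>_pos]] b_nonneg this y,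
      of "idx_list \<nu>"]
  show "let \<sigma> = (\<alpha>1 + \<alpha>2 * (onorm ET)\<^sup>2) / 2 * (norm f / \<beta>1 + norm uhat)\<^sup>2 * \<theta> in
     \<bar>dnu \<nu> (\<lambda>y'. exp (\<theta> * Phi \<alpha>1 \<alpha>2 J ET B0 Bj f uhat y')) y\<bar>
       \<le> exp (max \<sigma> (\<sigma> * exp 1 ^ 2 + 2 * \<sigma> - 1)) * fact (mabs \<nu>) * mpow (\<lambda>j. exp 1 * b j) \<nu>"
    by (simp add: Let_def dnu_def pdiffs_def length_idx_list[OF \<nu>] prod_list_idx_list[OF \<nu>, symmetric]
        prod_list_const_mult ac_simps)
qed

end
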